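(* Let $\alpha$ be a snowy weak composition. Then (1) $\mathsf{dark}(\alpha)=\{(r,\alpha_r):\alpha_r>0\}$; (2) $\mathsf{rajcode}(\alpha)_r=\alpha_r+|\{r'>r:\alpha_r<\alpha_{r'}\}|$ for every $r$; (3) $\mathsf{raj}(\alpha)=|\alpha|+|\{(r,r'):r<r',\ \alpha_r<\alpha_{r'}\}|$.
   Context: A weak composition is an infinite sequence of nonnegative integers with finitely many positive entries; it is snowy if its positive entries are distinct; $|\alpha|=\sum\alpha_i$. $D(\alpha)=\{(r,c):1\le c\le\alpha_r\}$ (row 1 on top). For a diagram $D$, $\mathsf{snow}(D)$ is built by iterating through rows from bottom to top: in row $r$ take the rightmost cell $(r,c)\in D$ such that column $c$ contains no dark cloud yet; if it exists label it a dark cloud and add snowflake cells at $(r',c)$ for all $r'<r$ with $(r',c)\notin D$. $\mathsf{dark}(\alpha)$ is the set of dark clouds of $\mathsf{snow}(D(\alpha))$, $\mathsf{rajcode}(\alpha)_i$ is the number of cells of $\mathsf{snow}(D(\alpha))$ in row $i$, and $\mathsf{raj}(\alpha)=|\mathsf{rajcode}(\alpha)|$. *)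

theory Defs
  imports Main
begin

text \<open>Weak compositions are modelled as functions nat => nat, indexed from 1
  (entry alpha 0 is required to be 0 and plays no role), with finite support.\<close>

definition weak_comp :: "(nat \<Rightarrow> nat) \<Rightarrow> bool" where
  "weak_comp \<alpha> \<longleftrightarrow> \<alpha> 0 = 0 \<and> finite {i. \<alpha> i > 0}"

definition snowy :: "(nat \<Rightarrow> nat) \<Rightarrow> bool" where
  "snowy \<alpha> \<longleftrightarrow> weak_comp \<alpha> \<and> inj_on \<alpha> {i. \<alpha> i > 0}"

definition wsize :: "(nat \<Rightarrow> nat) \<Rightarrow> nat" where
  "wsize \<beta> = (\<Sum>i\<in>{i. \<beta> i \<noteq> 0}. \<beta> i)"

definition diag :: "(nat \<Rightarrow> nat) \<Rightarrow> (nat \<times> nat) set" where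
  "diag \<alpha> = {(r, c). 1 \<le> r \<and> 1 \<le> c \<and> c \<le> \<alpha> r}"

text \<open>One step of the snow construction on row r. State = (dark clouds, snowflakes).\<close>
definition snow_step ::
  "(nat \<times> nat) set \<Rightarrow> nat \<Rightarrow> (nat \<times> nat) set \<times> (nat \<times> nat) set
     \<Rightarrow> (nat \<times> nat) set \<times> (nat \<times> nat) set" where
  "snow_step D r st =
     (let dk = fst st; sn = snd st;
          cols = {c. (r, c) \<in> D \<and> c \<notin> snd ` dk}
      in if cols = {} then st
         else (let c = Max cols in
               (insert (r, c) dk, sn \<union> {(r', c) | r'. 1 \<le> r' \<and> r' < r \<and> (r', c) \<notin> D})))"

text \<open>Lowest (i.e. largest-index) nonempty row of a finite diagram.\<close>
definition bottom_row :: "(nat \<times> nat) set \<Rightarrow> nat" where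
  "bottom_row D = (if D = {} then 0 else Max (fst ` D))"

definition snow_state :: "(nat \<times> nat) set \<Rightarrow> (nat \<times> nat) set \<times> (nat \<times> nat) set" where
  "snow_state D = foldl (\<lambda>st r. snow_step D r st) ({}, {}) (rev [1..<Suc (bottom_row D)])"

definition snow :: "(nat \<times> nat) set \<Rightarrow> (nat \<times> nat) set" where
  "snow D = D \<union> snd (snow_state D)"

definition dark_clouds :: "(nat \<times> nat) set \<Rightarrow> (nat \<times> nat) set" where
  "dark_clouds D = fst (snow_state D)"

definition dark :: "(nat \<Rightarrow> nat) \<Rightarrow> (nat \<times> nat) set" where
  "dark \<alpha> = dark_clouds (diag \<alpha>)"

definition rajcode :: "(nat \<Rightarrow> nat) \<Rightarrow> nat \<Rightarrow> nat" where
  "rajcode \<alpha> i = card {c. (i, c) \<in> snow (diag \<alpha>)}"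

definition raj :: "(nat \<Rightarrow> nat) \<Rightarrow> nat" where
  "raj \<alpha> = wsize (rajcode \<alpha>)"

end

theory Submission
  imports Defs
begin

text \<open>When row r is reached, the dark clouds so far sit in the
  columns \<alpha> r' of the lower nonempty rows r' > r; as the positive entries are distinct, the last
  cell (r, \<alpha> r) of row r is free, so it becomes the dark cloud of row r, and its snowflakes land
  exactly in the rows above whose last cell lies left of column \<alpha> r. Hence row r of the snow
  diagram has its \<alpha> r cells plus one snowflake per lower row r' > r with \<alpha> r < \<alpha> r', and
  summing over r gives raj.\<close>

text \<open>The state of the construction on diag \<alpha> once all rows r \<ge> m have been processed.\<close>

definition dark_from :: "(nat \<Rightarrow> nat) \<Rightarrow> nat \<Rightarrow> (nat \<times> nat) set" where
  "dark_from \<alpha> m = {(r, \<alpha> r) | r. m \<le> r \<and> \<alpha> r > 0}"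

definition row_flakes :: "(nat \<Rightarrow> nat) \<Rightarrow> nat \<Rightarrow> (nat \<times> nat) set" where
  "row_flakes \<alpha> r = {(r', \<alpha> r) | r'. \<alpha> r > 0 \<and> 1 \<le> r' \<and> r' < r \<and> \<alpha> r' < \<alpha> r}"

definition flakes_from :: "(nat \<Rightarrow> nat) \<Rightarrow> nat \<Rightarrow> (nat \<times> nat) set" where
  "flakes_from \<alpha> m = (\<Union>r\<in>{m..}. row_flakes \<alpha> r)"

lemma dark_from_eq_Suc:
  "dark_from \<alpha> m =
     (if \<alpha> m = 0 then dark_from \<alpha> (Suc m) else insert (m, \<alpha> m) (dark_from \<alpha> (Suc m)))"
  unfolding dark_from_def by (auto simp: le_eq_less_or_eq Suc_le_eq)

lemma flakes_from_eq_Suc: "flakes_from \<alpha> m = flakes_from \<alpha> (Suc m) \<union> row_flakes \<alpha> m"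
proof -
  have "{m..} = insert m {Suc m..}"
    by auto
  then show ?thesis
    unfolding flakes_from_def by (simp add: Un_commute)
qed

lemma snow_step_snowy:
  assumes "snowy \<alpha>" and "1 \<le> m"
  shows "snow_step (diag \<alpha>) m (dark_from \<alpha> (Suc m), flakes_from \<alpha> (Suc m))
           = (dark_from \<alpha> m, flakes_from \<alpha> m)"
proof (cases "\<alpha> m = 0")
  case True
  then show ?thesis
    by (simp add: snow_step_def diag_def dark_from_eq_Suc[of _ m] flakes_from_eq_Suc[of _ m]
        row_flakes_def)
next
  case False
  define cols where "cols = {c. (m, c) \<in> diag \<alpha> \<and> c \<notin> snd ` dark_from \<alpha> (Suc m)}"
  have "inj_on \<alpha> {i. \<alpha> i > 0}"
    using assms(1) unfolding snowy_def by simp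
  then have "\<alpha> m \<notin> snd ` dark_from \<alpha> (Suc m)"
    using False unfolding dark_from_def inj_on_def by fastforce
  then have end_in_cols: "\<alpha> m \<in> cols"
    using False assms(2) unfolding cols_def diag_def by simp
  have cols_le: "c \<le> \<alpha> m" if "c \<in> cols" for c
    using that unfolding cols_def diag_def by simp
  have "finite cols"
    using cols_le by (intro finite_subset[OF _ finite_atMost[of "\<alpha> m"]]) blast
  then have "Max cols = \<alpha> m"
    using end_in_cols cols_le by (intro Max_eqI) auto
  moreover have "{(r', \<alpha> m) | r'. 1 \<le> r' \<and> r' < m \<and> (r', \<alpha> m) \<notin> diag \<alpha>} = row_flakes \<alpha> m"
    using False unfolding row_flakes_def diag_def by auto
  ultimately show ?thesis
    using end_in_cols False
    unfolding snow_step_def Let_def fst_conv snd_conv cols_def[symmetric]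
    by (auto simp: dark_from_eq_Suc[of _ m] flakes_from_eq_Suc[of _ m])
qed

lemma snow_fold_snowy:
  assumes "snowy \<alpha>" and bound: "\<forall>r. 0 < \<alpha> r \<longrightarrow> r \<le> N" and "1 \<le> m" "m \<le> Suc N"
  shows "foldl (\<lambda>st r. snow_step (diag \<alpha>) r st) ({}, {}) (rev [m..<Suc N])
           = (dark_from \<alpha> m, flakes_from \<alpha> m)"
  using \<open>m \<le> Suc N\<close> \<open>1 \<le> m\<close>
proof (induction m rule: inc_induct)
  case base
  have "\<alpha> r = 0" if "N < r" for r
    using bound[rule_format, of r] that by auto
  then have "dark_from \<alpha> (Suc N) = {}" and "flakes_from \<alpha> (Suc N) = {}"
    by (auto simp: dark_from_def flakes_from_def row_flakes_def Suc_le_eq)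
  then show ?case
    by simp
next
  case (step n)
  have "rev [n..<Suc N] = rev [Suc n..<Suc N] @ [n]"
    using step.hyps by (simp add: upt_rec)
  then show ?case
    using step.IH step.prems snow_step_snowy[OF \<open>snowy \<alpha>\<close>] by simp
qed

lemma finite_diag:
  assumes "weak_comp \<alpha>"
  shows "finite (diag \<alpha>)"
proof -
  have "finite (SIGMA r:{i. \<alpha> i > 0}. {1..\<alpha> r})"
    using assms unfolding weak_comp_def by auto
  moreover have "diag \<alpha> \<subseteq> (SIGMA r:{i. \<alpha> i > 0}. {1..\<alpha> r})"
    unfolding diag_def by auto
  ultimately show ?thesis
    by (rule finite_subset[rotated])
qed

lemma le_bottom_row_diag:
  assumes "weak_comp \<alpha>" and "\<alpha> r > 0"
  shows "r \<le> bottom_row (diag \<alpha>)"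
proof -
  have "r \<noteq> 0"
    using assms unfolding weak_comp_def by (metis less_irrefl)
  then have "(r, 1) \<in> diag \<alpha>"
    using assms(2) unfolding diag_def by simp
  then have "r \<in> fst ` diag \<alpha>"
    by force
  then show ?thesis
    using finite_diag[OF assms(1)] unfolding bottom_row_def by auto
qed

lemma snow_state_snowy:
  assumes "snowy \<alpha>"
  shows "snow_state (diag \<alpha>) = (dark_from \<alpha> 1, flakes_from \<alpha> 1)"
proof -
  have "\<forall>r. 0 < \<alpha> r \<longrightarrow> r \<le> bottom_row (diag \<alpha>)"
    using assms le_bottom_row_diag unfolding snowy_def by blast
  then show ?thesis
    unfolding snow_state_def using snow_fold_snowy[OF assms] by simp
qed

lemma dark_snowy:
  assumes "snowy \<alpha>"
  shows "dark \<alpha> = {(r, \<alpha> r) | r. 1 \<le> r \<and> \<alpha> r > 0}"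
  unfolding dark_def dark_clouds_def snow_state_snowy[OF assms] dark_from_def by simp

lemma snow_row_snowy:
  assumes "snowy \<alpha>" and "1 \<le> i"
  shows "{c. (i, c) \<in> snow (diag \<alpha>)} = {1..\<alpha> i} \<union> \<alpha> ` {r'. i < r' \<and> \<alpha> i < \<alpha> r'}"
  using assms(2) unfolding snow_def snow_state_snowy[OF assms(1)]
  by (auto simp: diag_def flakes_from_def row_flakes_def)

lemma rajcode_0:
  assumes "snowy \<alpha>"
  shows "rajcode \<alpha> 0 = 0"
  unfolding rajcode_def snow_def snow_state_snowy[OF assms]
  by (simp add: diag_def flakes_from_def row_flakes_def)

lemma rajcode_snowy:
  assumes "snowy \<alpha>" and "1 \<le> i"
  shows "rajcode \<alpha> i = \<alpha> i + card {r'. i < r' \<and> \<alpha> i < \<alpha> r'}"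
proof -
  define B where "B = {r'. i < r' \<and> \<alpha> i < \<alpha> r'}"
  have B_pos: "B \<subseteq> {r. \<alpha> r > 0}"
    unfolding B_def by auto
  have "finite {r. \<alpha> r > 0}" and inj: "inj_on \<alpha> {r. \<alpha> r > 0}"
    using assms(1) unfolding snowy_def weak_comp_def by auto
  then have "finite B"
    using B_pos finite_subset by blast
  moreover have "{1..\<alpha> i} \<inter> \<alpha> ` B = {}"
    unfolding B_def by auto
  ultimately have "card ({1..\<alpha> i} \<union> \<alpha> ` B) = \<alpha> i + card (\<alpha> ` B)"
    by (simp add: card_Un_disjoint)
  also have "card (\<alpha> ` B) = card B"
    using inj_on_subset[OF inj B_pos] by (rule card_image)
  finally show ?thesis
    unfolding rajcode_def snow_row_snowy[OF assms] B_def .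
qed

lemma wsize_eq_sum:
  assumes "finite A" and "{i. \<beta> i \<noteq> 0} \<subseteq> A"
  shows "wsize \<beta> = sum \<beta> A"
  unfolding wsize_def using assms by (intro sum.mono_neutral_left) auto

lemma raj_snowy:
  assumes "snowy \<alpha>"
  shows "raj \<alpha> = wsize \<alpha> + card {(r, r'). 1 \<le> r \<and> r < r' \<and> \<alpha> r < \<alpha> r'}"
proof -
  have "\<alpha> 0 = 0" and fin: "finite {r. \<alpha> r > 0}"
    using assms unfolding snowy_def weak_comp_def by auto
  then obtain N where N: "\<forall>r. 0 < \<alpha> r \<longrightarrow> r \<le> N"
    using finite_nat_set_iff_bounded_le by auto
  have support: "r \<in> {1..N}" if "\<alpha> r \<noteq> 0" for r
    using that N \<open>\<alpha> 0 = 0\<close> by (cases "r = 0") auto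
  define B where "B r = {r'. r < r' \<and> \<alpha> r < \<alpha> r'}" for r
  have B_below: "r < N" if "r' \<in> B r" for r r'
    using N[rule_format, of r'] that unfolding B_def by simp
  have "finite (B r)" for r
    using fin by (rule finite_subset[rotated]) (auto simp: B_def)
  have rajcode_outside: "rajcode \<alpha> r = 0" if "r \<notin> {1..N}" for r
  proof (cases "r = 0")
    case True
    then show ?thesis
      using rajcode_0[OF assms] by simp
  next
    case False
    then have "1 \<le> r" and "\<alpha> r = 0" and "B r = {}"
      using that support B_below by fastforce+
    moreover have "rajcode \<alpha> r = \<alpha> r + card (B r)"
      using rajcode_snowy[OF assms \<open>1 \<le> r\<close>] unfolding B_def .
    ultimately show ?thesis
      by simp
  qed
  have "raj \<alpha> = (\<Sum>r\<in>{1..N}. rajcode \<alpha> r)"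
    unfolding raj_def by (intro wsize_eq_sum) (use rajcode_outside in force)+
  also have "\<dots> = (\<Sum>r\<in>{1..N}. \<alpha> r) + (\<Sum>r\<in>{1..N}. card (B r))"
    using rajcode_snowy[OF assms] by (simp add: B_def sum.distrib)
  also have "(\<Sum>r\<in>{1..N}. \<alpha> r) = wsize \<alpha>"
    using support by (intro wsize_eq_sum[symmetric]) auto
  also have "(\<Sum>r\<in>{1..N}. card (B r)) = card (Sigma {1..N} B)"
    using \<open>\<And>r. finite (B r)\<close> by (simp add: card_SigmaI)
  also have "Sigma {1..N} B = {(r, r'). 1 \<le> r \<and> r < r' \<and> \<alpha> r < \<alpha> r'}"
    using B_below unfolding B_def by fastforce
  finally show ?thesis .
qed

theorem lemma4p18:
  fixes \<alpha> :: "nat \<Rightarrow> nat"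
  assumes "snowy \<alpha>"
  shows "dark \<alpha> = {(r, \<alpha> r) | r. 1 \<le> r \<and> \<alpha> r > 0} \<and>
         (\<forall>r\<ge>1. rajcode \<alpha> r = \<alpha> r + card {r'. r < r' \<and> \<alpha> r < \<alpha> r'}) \<and>
         raj \<alpha> = wsize \<alpha> + card {(r, r'). 1 \<le> r \<and> r < r' \<and> \<alpha> r < \<alpha> r'}"
  using dark_snowy[OF assms] rajcode_snowy[OF assms] raj_snowy[OF assms] by blast

end
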